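(* Let $k\ge1$ and $d\ge0$ be integers. If there is a binary self-orthogonal $[g(k,d+4),k,d+4]$ Griesmer code and $g(k,d+4)>2^k$, then $d_{so}(N,k)=d+2$ for every integer $N$ with $g(k,d+2)+1\le N\le g(k,d+4)-1$.
   Context: $g(k,d)=\sum_{i=0}^{k-1}\lceil d/2^i\rceil$. A binary code is self-orthogonal if $C\subseteq C^\perp$; a binary $[n,k,d]$ code is Griesmer if $n=g(k,d)$. $d_{so}(n,k)$ denotes the largest minimum distance among all binary self-orthogonal $[n,k]$ codes. *)

theory Defs
  imports Complex_Main
begin

text \<open>Binary words of length n are boolean lists (True = 1, False = 0);
  addition over GF(2) is componentwise exclusive or.\<close>

definition zero_word :: "nat \<Rightarrow> bool list" where
  "zero_word n = replicate n False"

definition word_add :: "bool list \<Rightarrow> bool list \<Rightarrow> bool list" where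
  "word_add x y = map2 (\<noteq>) x y"

definition weight :: "bool list \<Rightarrow> nat" where
  "weight x = length (filter id x)"

text \<open>Standard inner product over GF(2): the number of common 1-positions, taken mod 2.\<close>
definition dot :: "bool list \<Rightarrow> bool list \<Rightarrow> nat" where
  "dot x y = length (filter id (map2 (\<and>) x y))"

text \<open>A binary linear [n,k] code: a GF(2)-subspace of GF(2)^n of dimension k,
  i.e. with exactly 2^k elements.\<close>
definition linear_code :: "nat \<Rightarrow> nat \<Rightarrow> bool list set \<Rightarrow> bool" where
  "linear_code n k C \<longleftrightarrow>
     C \<subseteq> {x. length x = n} \<and> zero_word n \<in> C \<and>
     (\<forall>x\<in>C. \<forall>y\<in>C. word_add x y \<in> C) \<and> card C = 2 ^ k"

definition min_dist :: "bool list set \<Rightarrow> nat" where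
  "min_dist C = Min {weight c | c. c \<in> C \<and> True \<in> set c}"

definition code :: "nat \<Rightarrow> nat \<Rightarrow> nat \<Rightarrow> bool list set \<Rightarrow> bool" where
  "code n k d C \<longleftrightarrow> linear_code n k C \<and> min_dist C = d"

definition self_orthogonal :: "bool list set \<Rightarrow> bool" where
  "self_orthogonal C \<longleftrightarrow> (\<forall>x\<in>C. \<forall>y\<in>C. even (dot x y))"

definition griesmer_g :: "nat \<Rightarrow> nat \<Rightarrow> nat" where
  "griesmer_g k d = (\<Sum>i<k. nat \<lceil>real d / 2 ^ i\<rceil>)"

definition griesmer_code :: "nat \<Rightarrow> nat \<Rightarrow> nat \<Rightarrow> bool list set \<Rightarrow> bool" where
  "griesmer_code n k d C \<longleftrightarrow> code n k d C \<and> n = griesmer_g k d"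

definition d_so :: "nat \<Rightarrow> nat \<Rightarrow> nat" where
  "d_so n k = Max {d. \<exists>C. code n k d C \<and> self_orthogonal C}"

end

theory Submission
  imports Defs
begin

text \<open>Upper bound: all weights of a self-orthogonal code are even, and d is even because d + 4
  is such a weight; so by the Griesmer bound a self-orthogonal [N, k] code with N < g(k, d + 4)
  has minimum distance at most d + 2.

  Lower bound: the Griesmer code C is longer than 2^k, and a coordinate of C is determined by its
  values on a basis, so two coordinates agree on all of C. Deleting both keeps C self-orthogonal
  (they contribute 0 or 2 to every inner product), keeps it injective (d + 4 \<ge> 3) and lowers
  weights by at most 2; appending zero coordinates then gives self-orthogonal [N, k, \<ge> d + 2]
  codes for every N \<ge> g(k, d + 4) - 2. This covers all N > g(k, d + 2) because for k \<ge> 2 the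
  residual code argument forces 4 | d + 4, whence g(k, d + 4) = g(k, d + 2) + 3.\<close>

section \<open>The Griesmer function\<close>

lemma nat_ceiling_divide_eq_div:
  assumes "0 < b"
  shows "nat \<lceil>real a / real b\<rceil> = (a + b - 1) div b"
proof -
  define q where "q = (a + b - 1) div b"
  have "a + b - 1 = b * q + (a + b - 1) mod b" unfolding q_def by simp
  moreover have "(a + b - 1) mod b < b" using assms by simp
  ultimately have q_upper: "a \<le> b * q" and q_lower: "b * q < a + b" using assms by linarith+
  have "\<lceil>real a / real b\<rceil> = int q"
  proof (rule ceiling_unique)
    show "real a / real b \<le> real_of_int (int q)"
      using q_upper assms by (simp add: divide_le_eq mult.commute flip: of_nat_mult)
    have "real b * (real q - 1) < real a"
      using q_lower by (simp add: algebra_simps flip: of_nat_add of_nat_mult)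
    then show "real_of_int (int q) - 1 < real a / real b"
      using assms by (simp add: pos_less_divide_eq mult.commute)
  qed
  then show ?thesis unfolding q_def by simp
qed

lemma griesmer_g_0 [simp]: "griesmer_g 0 w = 0"
  by (simp add: griesmer_g_def)

lemma griesmer_g_Suc: "griesmer_g (Suc k) w = w + griesmer_g k ((w + 1) div 2)"
proof -
  have term_eq: "nat \<lceil>real w / 2 ^ i\<rceil> = (w + 2 ^ i - 1) div 2 ^ i" for w i
    using nat_ceiling_divide_eq_div[of "2 ^ i" w] by simp
  have halve: "(w + 2 ^ Suc i - 1) div 2 ^ Suc i = ((w + 1) div 2 + 2 ^ i - 1) div 2 ^ i" for i
  proof -
    have "(w + 1) div 2 + p - 1 = (w + 2 * p - 1) div 2" if "1 \<le> p" for p :: nat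
      using that by presburger
    then have "(w + 1) div 2 + 2 ^ i - 1 = (w + 2 ^ Suc i - 1) div 2" by simp
    then show ?thesis by (simp add: div_mult2_eq mult.commute)
  qed
  show ?thesis
    unfolding griesmer_g_def term_eq
    by (subst sum.lessThan_Suc_shift) (use halve in simp)
qed

lemma griesmer_g_mono: "w \<le> w' \<Longrightarrow> griesmer_g k w \<le> griesmer_g k w'"
  unfolding griesmer_g_def by (intro sum_mono nat_mono ceiling_mono divide_right_mono) auto

lemma griesmer_g_less_Suc: "1 \<le> k \<Longrightarrow> griesmer_g k w < griesmer_g k (Suc w)"
proof -
  assume "1 \<le> k"
  then obtain k' where "k = Suc k'" by (cases k) auto
  moreover have "griesmer_g k' ((w + 1) div 2) \<le> griesmer_g k' ((Suc w + 1) div 2)"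
    by (rule griesmer_g_mono) simp
  ultimately show ?thesis by (simp add: griesmer_g_Suc)
qed

text \<open>The first two terms of g grow by 2 and 1, and all later ones agree.\<close>
lemma griesmer_g_add_two_le:
  assumes "4 dvd w"
  shows "griesmer_g k (w + 4) \<le> griesmer_g k (w + 2) + 3"
proof -
  obtain t where w: "w = 4 * t" using assms by blast
  show ?thesis
  proof (cases k)
    case (Suc k')
    then show ?thesis
    proof (cases k')
      case (Suc k'')
      have "(4 * t + 4 + 1) div 2 = 2 * t + 2" "(2 * t + 2 + 1) div 2 = t + 1"
        "(4 * t + 2 + 1) div 2 = 2 * t + 1" "(2 * t + 1 + 1) div 2 = t + 1" by simp_all
      then show ?thesis using \<open>k = Suc k'\<close> Suc w by (simp add: griesmer_g_Suc)
    qed (simp add: griesmer_g_Suc)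
  qed simp
qed

section \<open>Binary words and linear codes\<close>

lemma length_word_add [simp]: "length (word_add x y) = min (length x) (length y)"
  by (simp add: word_add_def)

lemma nth_word_add [simp]:
  "i < length x \<Longrightarrow> i < length y \<Longrightarrow> word_add x y ! i = (x ! i \<noteq> y ! i)"
  by (simp add: word_add_def)

lemma length_zero_word [simp]: "length (zero_word n) = n"
  by (simp add: zero_word_def)

lemma nth_zero_word [simp]: "i < n \<Longrightarrow> zero_word n ! i = False"
  by (simp add: zero_word_def)

lemma word_add_cancel_left: "length x = length y \<Longrightarrow> word_add x (word_add x y) = y"
  by (rule nth_equalityI) auto

lemma word_add_self: "word_add x x = zero_word (length x)"
  by (rule nth_equalityI) auto

lemma zero_word_nonzero [simp]: "True \<notin> set (zero_word n)"
  by (simp add: zero_word_def)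

lemma weight_zero_word [simp]: "weight (zero_word n) = 0"
  by (simp add: weight_def zero_word_def)

lemma nonzero_iff_neq_zero_word: "True \<in> set x \<longleftrightarrow> x \<noteq> zero_word (length x)"
  by (auto simp: list_eq_iff_nth_eq in_set_conv_nth)

lemma nonzero_word_add_iff: "length x = length y \<Longrightarrow> True \<in> set (word_add x y) \<longleftrightarrow> x \<noteq> y"
  by (auto simp: list_eq_iff_nth_eq in_set_conv_nth)

lemma weight_map: "distinct L \<Longrightarrow> weight (map f L) = card {l \<in> set L. f l}"
  by (simp add: weight_def filter_map comp_def distinct_card[symmetric] flip: set_filter)

lemma weight_eq_card: "weight x = card {l. l < length x \<and> x ! l}"
proof -
  have "weight x = weight (map ((!) x) [0..<length x])" by (simp add: map_nth)
  then show ?thesis by (simp add: weight_map)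
qed

lemma weight_pos_iff: "0 < weight x \<longleftrightarrow> True \<in> set x"
  by (auto simp: weight_def filter_empty_conv)

lemma weight_le_length: "weight x \<le> length x"
  by (simp add: weight_def)

lemma dot_map: "distinct L \<Longrightarrow> dot (map f L) (map g L) = card {l \<in> set L. f l \<and> g l}"
proof -
  assume "distinct L"
  have "map2 (\<and>) (map f L) (map g L) = map (\<lambda>l. f l \<and> g l) L" by (induct L) auto
  then have "dot (map f L) (map g L) = weight (map (\<lambda>l. f l \<and> g l) L)"
    by (simp add: dot_def weight_def)
  with \<open>distinct L\<close> show ?thesis by (simp add: weight_map)
qed

lemma dot_eq_card: "length y = length x \<Longrightarrow> dot x y = card {l. l < length x \<and> x ! l \<and> y ! l}"
proof -
  assume "length y = length x"
  then have "dot x y = dot (map ((!) x) [0..<length x]) (map ((!) y) [0..<length x])"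
    by (metis map_nth)
  then show ?thesis by (simp add: dot_map)
qed

lemma dot_self: "dot x x = weight x"
  by (simp add: dot_eq_card weight_eq_card)

text \<open>Positions beyond the end of x read as 0, so project L x may also append zero coordinates.\<close>
definition project :: "nat list \<Rightarrow> bool list \<Rightarrow> bool list" where
  "project L x = map (\<lambda>l. l < length x \<and> x ! l) L"

lemma length_project [simp]: "length (project L x) = length L"
  by (simp add: project_def)

lemma project_word_add:
  "length x = length y \<Longrightarrow> project L (word_add x y) = word_add (project L x) (project L y)"
  by (rule nth_equalityI) (auto simp: project_def)

lemma project_zero_word: "project L (zero_word n) = zero_word (length L)"
  by (rule nth_equalityI) (auto simp: project_def)

lemma weight_project:
  "distinct L \<Longrightarrow> weight (project L x) = card {l \<in> set L. l < length x \<and> x ! l}"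
  by (simp add: project_def weight_map)

lemma dot_project:
  "distinct L \<Longrightarrow> length y = length x \<Longrightarrow>
   dot (project L x) (project L y) = card {l \<in> set L. l < length x \<and> x ! l \<and> y ! l}"
  by (simp add: project_def dot_map conj_ac)

lemma linear_code_length: "linear_code n k C \<Longrightarrow> x \<in> C \<Longrightarrow> length x = n"
  by (auto simp: linear_code_def)

lemma linear_code_finite: "linear_code n k C \<Longrightarrow> finite C"
  unfolding linear_code_def by (metis card_ge_0_finite pos2 zero_less_power)

lemma linear_code_image:
  assumes C: "linear_code n k C"
    and length_f: "\<And>x. x \<in> C \<Longrightarrow> length (f x) = m"
    and f_add: "\<And>x y. x \<in> C \<Longrightarrow> y \<in> C \<Longrightarrow> f (word_add x y) = word_add (f x) (f y)"
    and card_image: "card (f ` C) = 2 ^ k'"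
  shows "linear_code m k' (f ` C)"
  unfolding linear_code_def
proof (intro conjI ballI)
  have zero: "zero_word n \<in> C" using C by (simp add: linear_code_def)
  then have "f (zero_word n) = zero_word m"
    using f_add[OF zero zero] length_f[OF zero] by (simp add: word_add_self)
  then show "zero_word m \<in> f ` C" using zero by (metis image_eqI)
  fix u v assume "u \<in> f ` C" "v \<in> f ` C"
  then obtain x y where "x \<in> C" "y \<in> C" "u = f x" "v = f y" by blast
  moreover have "word_add x y \<in> C" using C \<open>x \<in> C\<close> \<open>y \<in> C\<close> by (simp add: linear_code_def)
  ultimately show "word_add u v \<in> f ` C" using f_add by (metis image_eqI)
qed (use length_f card_image in auto)

lemma linear_code_has_nonzero:
  assumes "linear_code n k C" "0 < k"
  shows "\<exists>x\<in>C. True \<in> set x"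
proof (rule ccontr)
  assume "\<not> (\<exists>x\<in>C. True \<in> set x)"
  then have "C \<subseteq> {zero_word n}"
    using assms(1) by (auto simp: nonzero_iff_neq_zero_word linear_code_length)
  then have "card C \<le> card {zero_word n}" by (intro card_mono) simp_all
  moreover have "card C = 2 ^ k" using assms(1) by (simp add: linear_code_def)
  ultimately show False using assms(2) by (simp add: le_Suc_eq)
qed

lemma min_dist_le_weight:
  "linear_code n k C \<Longrightarrow> x \<in> C \<Longrightarrow> True \<in> set x \<Longrightarrow> min_dist C \<le> weight x"
  unfolding min_dist_def by (rule Min_le) (auto simp: linear_code_finite)

lemma min_dist_attained:
  assumes "linear_code n k C" "0 < k"
  shows "\<exists>c\<in>C. True \<in> set c \<and> weight c = min_dist C"
proof -
  have "{weight c | c. c \<in> C \<and> True \<in> set c} \<noteq> {}"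
    using linear_code_has_nonzero[OF assms] by auto
  then have "min_dist C \<in> {weight c | c. c \<in> C \<and> True \<in> set c}"
    unfolding min_dist_def by (intro Min_in) (simp_all add: linear_code_finite[OF assms(1)])
  then show ?thesis by auto
qed

lemma le_min_distI:
  "linear_code n k C \<Longrightarrow> 0 < k \<Longrightarrow>
   (\<And>x. x \<in> C \<Longrightarrow> True \<in> set x \<Longrightarrow> w \<le> weight x) \<Longrightarrow> w \<le> min_dist C"
  using min_dist_attained[of n k C] by fastforce

lemma self_orthogonal_even_weight: "self_orthogonal C \<Longrightarrow> x \<in> C \<Longrightarrow> even (weight x)"
  unfolding self_orthogonal_def by (metis dot_self)

section \<open>The residual code and the Griesmer bound\<close>

lemma card_bounded_split:
  fixes n :: nat
  shows "card {l. l < n \<and> P l} =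
         card {l. l < n \<and> P l \<and> Q l} + card {l. l < n \<and> P l \<and> \<not> Q l}"
proof -
  have "card {l. l < n \<and> P l} =
        card ({l. l < n \<and> P l \<and> Q l} \<union> {l. l < n \<and> P l \<and> \<not> Q l})"
    by (rule arg_cong[where f = card]) auto
  also have "\<dots> = card {l. l < n \<and> P l \<and> Q l} + card {l. l < n \<and> P l \<and> \<not> Q l}"
    by (rule card_Un_disjoint) (auto intro: finite_subset[OF _ finite_Collect_less_nat[of n]])
  finally show ?thesis .
qed

locale min_weight_codeword =
  fixes n k :: nat and C :: "bool list set" and c :: "bool list"
  assumes code: "linear_code n (Suc k) C"
    and c_in: "c \<in> C" and c_nonzero: "True \<in> set c" and weight_c: "weight c = min_dist C"
begin

definition off_support :: "nat list" where
  "off_support = filter (\<lambda>l. \<not> c ! l) [0..<n]"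

abbreviation residual :: "bool list \<Rightarrow> bool list" where
  "residual \<equiv> project off_support"

lemma length_C: "x \<in> C \<Longrightarrow> length x = n"
  using code by (rule linear_code_length)

lemma word_add_in: "x \<in> C \<Longrightarrow> y \<in> C \<Longrightarrow> word_add x y \<in> C"
  using code by (simp add: linear_code_def)

lemma weight_c_le: "x \<in> C \<Longrightarrow> True \<in> set x \<Longrightarrow> weight c \<le> weight x"
  unfolding weight_c using code by (rule min_dist_le_weight)

lemma weight_c_eq_card: "weight c = card {l. l < n \<and> c ! l}"
  by (simp add: weight_eq_card length_C[OF c_in])

lemma distinct_off_support: "distinct off_support"
  by (simp add: off_support_def)

lemma length_off_support: "length off_support = n - weight c"
proof -
  have "length off_support = card {l. l < n \<and> \<not> c ! l}"
    by (simp add: off_support_def distinct_card[symmetric] conj_commute)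
  then show ?thesis
    using card_bounded_split[of n "\<lambda>_. True" "\<lambda>l. c ! l"] by (simp add: weight_c_eq_card)
qed

lemma weight_residual: "x \<in> C \<Longrightarrow> weight (residual x) = card {l. l < n \<and> x ! l \<and> \<not> c ! l}"
  unfolding weight_project[OF distinct_off_support]
  by (rule arg_cong[where f = card]) (auto simp: off_support_def length_C)

lemma weight_eq_dot_add_weight_residual: "x \<in> C \<Longrightarrow> weight x = dot x c + weight (residual x)"
  using card_bounded_split[of n "(!) x" "(!) c"]
  by (simp add: weight_eq_card[of x] dot_eq_card length_C c_in weight_residual)

lemma weight_word_add_c: "x \<in> C \<Longrightarrow> weight (word_add x c) + dot x c = weight c + weight (residual x)"
proof -
  assume x: "x \<in> C"
  let ?y = "word_add x c"
  have "{l. l < n \<and> ?y ! l \<and> c ! l} = {l. l < n \<and> c ! l \<and> \<not> x ! l}"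
    "{l. l < n \<and> ?y ! l \<and> \<not> c ! l} = {l. l < n \<and> x ! l \<and> \<not> c ! l}"
    using length_C[OF x] length_C[OF c_in] by auto
  moreover have "weight ?y = card {l. l < n \<and> ?y ! l}"
    using length_C[OF x] length_C[OF c_in] by (simp add: weight_eq_card)
  ultimately have "weight ?y = card {l. l < n \<and> c ! l \<and> \<not> x ! l} + weight (residual x)"
    using card_bounded_split[of n "(!) ?y" "(!) c"] by (simp add: weight_residual x)
  moreover have "weight c = card {l. l < n \<and> c ! l \<and> \<not> x ! l} + dot x c"
    using card_bounded_split[of n "(!) c" "\<lambda>l. \<not> x ! l"]
    by (simp add: weight_c_eq_card dot_eq_card x length_C c_in conj_ac)
  ultimately show ?thesis by simp
qed

lemma residual_word_add:
  "x \<in> C \<Longrightarrow> y \<in> C \<Longrightarrow> residual (word_add x y) = word_add (residual x) (residual y)"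
  by (simp add: project_word_add length_C)

lemma residual_c: "residual c = zero_word (n - weight c)"
proof (rule nth_equalityI)
  fix i assume "i < length (residual c)"
  then have i: "i < length off_support" and "i < n - weight c" by (simp_all add: length_off_support)
  moreover have "\<not> c ! (off_support ! i)" using nth_mem[OF i] by (simp add: off_support_def)
  ultimately show "residual c ! i = zero_word (n - weight c) ! i" by (simp add: project_def)
qed (simp add: length_off_support)

lemma residual_eq_zero_word:
  assumes z: "z \<in> C" and "residual z = zero_word (n - weight c)"
  shows "z = c \<or> z = zero_word n"
proof (rule disjCI)
  assume "z \<noteq> zero_word n"
  then have "weight c \<le> weight z" using weight_c_le z by (simp add: nonzero_iff_neq_zero_word length_C)
  moreover have "weight (residual z) = 0" using \<open>residual z = _\<close> by (simp add: weight_eq_card)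
  moreover have "dot z c \<le> weight c"
    unfolding weight_c_eq_card dot_eq_card[OF length_C[OF c_in, folded length_C[OF z]]]
    by (rule card_mono) (auto simp: length_C z)
  ultimately have "weight (word_add z c) = 0"
    using weight_eq_dot_add_weight_residual[OF z] weight_word_add_c[OF z] by linarith
  then have "True \<notin> set (word_add z c)" using weight_pos_iff by (metis less_irrefl)
  then show "z = c" using nonzero_word_add_iff[of z c] by (simp add: length_C z c_in)
qed

lemma residual_fibre: "x \<in> C \<Longrightarrow> {y \<in> C. residual y = residual x} = {x, word_add x c}"
proof (intro equalityI subsetI)
  fix y assume x: "x \<in> C" and "y \<in> {y \<in> C. residual y = residual x}"
  then have y: "y \<in> C" and "residual (word_add x y) = zero_word (n - weight c)"
    by (auto simp: residual_word_add word_add_self length_off_support)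
  then have "word_add x y = c \<or> word_add x y = zero_word n"
    using residual_eq_zero_word word_add_in x by blast
  then show "y \<in> {x, word_add x c}"
  proof
    assume "word_add x y = c"
    then show ?thesis using word_add_cancel_left[of x y] by (simp add: length_C x y)
  next
    assume "word_add x y = zero_word n"
    then have "True \<notin> set (word_add x y)" by simp
    then show ?thesis using nonzero_word_add_iff[of x y] by (simp add: length_C x y)
  qed
next
  fix y assume x: "x \<in> C" and "y \<in> {x, word_add x c}"
  moreover have "residual (word_add x c) = residual x"
    by (rule nth_equalityI) (auto simp: residual_word_add x c_in residual_c length_off_support)
  ultimately show "y \<in> {y \<in> C. residual y = residual x}" using word_add_in c_in by auto
qed

lemma word_add_c_neq: "x \<in> C \<Longrightarrow> word_add x c \<noteq> x"
proof
  assume x: "x \<in> C" and "word_add x c = x"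
  then have "c = word_add x x" using word_add_cancel_left[of x c] by (simp add: length_C c_in)
  then have "c = zero_word n" by (simp add: word_add_self length_C x)
  then show False using c_nonzero by simp
qed

lemma card_residual_image: "card (residual ` C) = 2 ^ k"
proof -
  define fibre where "fibre r = {y \<in> C. residual y = r}" for r
  have union: "\<Union> (fibre ` residual ` C) = C" by (auto simp: fibre_def)
  have "2 * card (fibre ` residual ` C) = card (\<Union> (fibre ` residual ` C))"
    by (rule card_partition) (use linear_code_finite[OF code] residual_fibre
        word_add_c_neq[THEN not_sym] in \<open>auto simp: fibre_def\<close>)
  moreover have "inj_on fibre (residual ` C)"
    by (rule inj_onI) (auto simp: fibre_def set_eq_iff)
  ultimately show ?thesis using code union by (simp add: card_image linear_code_def)
qed

lemma linear_code_residual: "linear_code (n - weight c) k (residual ` C)"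
  by (rule linear_code_image[OF code]) (simp_all add: length_off_support residual_word_add card_residual_image)

lemma weight_c_le_twice_weight_residual:
  assumes x: "x \<in> C" and nonzero: "True \<in> set (residual x)"
  shows "weight c \<le> 2 * weight (residual x)"
proof -
  have "x \<noteq> zero_word n" "x \<noteq> c"
    using nonzero residual_c by (auto simp: project_zero_word length_off_support)
  then have "weight c \<le> weight x" "weight c \<le> weight (word_add x c)"
    using x nonzero_word_add_iff[of x c] by (auto intro!: weight_c_le word_add_in c_in
        simp: nonzero_iff_neq_zero_word length_C c_in)
  then show ?thesis using weight_eq_dot_add_weight_residual[OF x] weight_word_add_c[OF x] by linarith
qed

lemma even_weight_residual:
  assumes so: "self_orthogonal C" and x: "x \<in> C"
  shows "even (weight (residual x))"
proof -
  have "even (weight x)" "even (dot x c)"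
    using so x c_in by (auto simp: self_orthogonal_def self_orthogonal_even_weight)
  then show ?thesis using weight_eq_dot_add_weight_residual[OF x] by simp
qed

end

theorem griesmer_bound:
  "linear_code n k C \<Longrightarrow> (\<And>x. x \<in> C \<Longrightarrow> True \<in> set x \<Longrightarrow> w \<le> weight x) \<Longrightarrow>
   griesmer_g k w \<le> n"
proof (induction k arbitrary: n C w)
  case (Suc k)
  obtain c where "c \<in> C" "True \<in> set c" "weight c = min_dist C"
    using min_dist_attained[OF Suc.prems(1)] by blast
  then interpret min_weight_codeword n k C c using Suc.prems(1) by unfold_locales
  have "griesmer_g k ((weight c + 1) div 2) \<le> n - weight c"
  proof (rule Suc.IH[OF linear_code_residual])
    fix y assume "y \<in> residual ` C" "True \<in> set y"
    then have "weight c \<le> 2 * weight y" using weight_c_le_twice_weight_residual by blast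
    then show "(weight c + 1) div 2 \<le> weight y" by linarith
  qed
  moreover have "weight c \<le> n" using weight_le_length length_C c_in by metis
  moreover have "w \<le> weight c" using Suc.prems(2) c_in c_nonzero by blast
  ultimately show ?case using griesmer_g_mono[of w "weight c" "Suc k"] by (simp add: griesmer_g_Suc)
qed simp

text \<open>Residual argument: for D = 2q with q odd, every nonzero residual word has even weight
  at least q, hence at least q + 1, so the residual code violates the Griesmer bound.\<close>
lemma self_orthogonal_griesmer_four_dvd:
  assumes code: "linear_code (griesmer_g k D) k C" and "2 \<le> k"
    and so: "self_orthogonal C" and D: "min_dist C = D"
  shows "4 dvd D"
proof -
  obtain k' where k: "k = Suc k'" and "1 \<le> k'" using \<open>2 \<le> k\<close> by (cases k) auto
  obtain c where "c \<in> C" "True \<in> set c" "weight c = D"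
    using min_dist_attained[OF code] \<open>2 \<le> k\<close> D by auto
  then interpret min_weight_codeword "griesmer_g k D" k' C c
    using code D k by unfold_locales simp_all
  obtain q where q: "D = 2 * q"
    using self_orthogonal_even_weight[OF so c_in] \<open>weight c = D\<close> by blast
  show "4 dvd D"
  proof (rule ccontr)
    assume "\<not> 4 dvd D"
    then have "odd q" using q by auto
    have "griesmer_g k' (q + 1) \<le> griesmer_g k D - weight c"
    proof (rule griesmer_bound[OF linear_code_residual])
      fix y assume "y \<in> residual ` C" "True \<in> set y"
      then have "q \<le> weight y" and "even (weight y)"
        using weight_c_le_twice_weight_residual even_weight_residual[OF so] \<open>weight c = D\<close> q
        by auto
      with \<open>odd q\<close> show "q + 1 \<le> weight y" by (cases "q = weight y") auto
    qed
    moreover have "griesmer_g k D = D + griesmer_g k' q" using q k by (simp add: griesmer_g_Suc)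
    moreover have "griesmer_g k' q < griesmer_g k' (q + 1)"
      using griesmer_g_less_Suc \<open>1 \<le> k'\<close> by simp
    ultimately show False using \<open>weight c = D\<close> by linarith
  qed
qed

lemma self_orthogonal_even_min_dist:
  assumes "linear_code n k C" "0 < k" "self_orthogonal C"
  shows "even (min_dist C)"
proof -
  obtain c where "c \<in> C" "weight c = min_dist C" using min_dist_attained[OF assms(1,2)] by blast
  then show ?thesis using self_orthogonal_even_weight[OF assms(3)] by metis
qed

lemma min_dist_less_if_shorter:
  assumes C: "linear_code n k C" "0 < k" and short: "n < griesmer_g k w"
  shows "min_dist C < w"
proof (rule ccontr)
  assume "\<not> min_dist C < w"
  then have "griesmer_g k w \<le> griesmer_g k (min_dist C)" by (simp add: griesmer_g_mono)
  also have "\<dots> \<le> n" using griesmer_bound[OF C(1)] min_dist_le_weight[OF C(1)] by blast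
  finally show False using short by simp
qed

lemma self_orthogonal_griesmer_length_le:
  assumes C: "linear_code (griesmer_g k (d + 4)) k C" "0 < k"
    and so: "self_orthogonal C" and md: "min_dist C = d + 4"
  shows "griesmer_g k (d + 4) \<le> griesmer_g k (d + 2) + 3"
proof (cases "k = 1")
  case False
  then have "4 dvd d + 4" using self_orthogonal_griesmer_four_dvd[OF C(1) _ so md] C(2) by simp
  then have "4 dvd d" by simp
  then show ?thesis by (rule griesmer_g_add_two_le)
qed (simp add: griesmer_g_Suc)

section \<open>Two equal coordinates of a long code\<close>

fun word_span :: "nat \<Rightarrow> bool list list \<Rightarrow> bool list set" where
  "word_span n [] = {zero_word n}"
| "word_span n (b # bs) = word_span n bs \<union> word_add b ` word_span n bs"

lemma finite_word_span: "finite (word_span n bs)"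
  by (induction bs) auto

lemma length_word_span: "\<forall>b\<in>set bs. length b = n \<Longrightarrow> x \<in> word_span n bs \<Longrightarrow> length x = n"
  by (induction bs arbitrary: x) auto

lemma word_span_subset: "linear_code n k C \<Longrightarrow> set bs \<subseteq> C \<Longrightarrow> word_span n bs \<subseteq> C"
  by (induction bs) (auto simp: linear_code_def)

lemma word_add_in_word_span:
  "\<forall>b\<in>set bs. length b = n \<Longrightarrow> x \<in> word_span n bs \<Longrightarrow> y \<in> word_span n bs \<Longrightarrow>
   word_add x y \<in> word_span n bs"
proof (induction bs arbitrary: x y)
  case Nil
  then show ?case by (simp add: word_add_self)
next
  case (Cons b bs)
  let ?S = "word_span n bs"
  have IH: "word_add u v \<in> ?S" if "u \<in> ?S" "v \<in> ?S" for u v using Cons that by simp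
  have len: "length u = n" if "u \<in> ?S" for u
    using length_word_span[of bs n u] Cons.prems(1) that by simp
  have "length b = n" using Cons.prems(1) by simp
  obtain u where u: "u \<in> ?S" "x = u \<or> x = word_add b u" using Cons.prems(2) by auto
  obtain v where v: "v \<in> ?S" "y = v \<or> y = word_add b v" using Cons.prems(3) by auto
  have "word_add (word_add b u) v = word_add b (word_add u v)"
    "word_add u (word_add b v) = word_add b (word_add u v)"
    "word_add (word_add b u) (word_add b v) = word_add u v"
    using len[OF u(1)] len[OF v(1)] \<open>length b = n\<close> by (auto intro!: nth_equalityI)
  then show ?case using u v IH[OF u(1) v(1)] by auto
qed

lemma word_span_equal_coords:
  "\<forall>b\<in>set bs. length b = n \<and> b ! i = b ! j \<Longrightarrow> i < n \<Longrightarrow> j < n \<Longrightarrow> x \<in> word_span n bs \<Longrightarrow>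
   x ! i = x ! j"
proof (induction bs arbitrary: x)
  case (Cons b bs)
  then have b: "length b = n" "b ! i = b ! j" by simp_all
  from Cons.prems(4) consider "x \<in> word_span n bs" | u where "u \<in> word_span n bs" "x = word_add b u"
    by auto
  then show ?case
  proof cases
    case 1
    then show ?thesis using Cons by simp
  next
    case 2
    then have "length u = n" "u ! i = u ! j"
      using length_word_span[of bs n u] Cons by simp_all
    then show ?thesis using 2 b Cons.prems(2,3) by simp
  qed
qed simp

lemma exists_list_card_word_span:
  "linear_code n k C \<Longrightarrow> m \<le> k \<Longrightarrow>
   \<exists>bs. length bs = m \<and> set bs \<subseteq> C \<and> card (word_span n bs) = 2 ^ m"
proof (induction m)
  case 0
  then show ?case by simp
next
  case (Suc m)
  then obtain bs where bs: "length bs = m" "set bs \<subseteq> C" "card (word_span n bs) = 2 ^ m" by auto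
  let ?S = "word_span n bs"
  have len: "\<forall>b\<in>set bs. length b = n" using bs(2) linear_code_length[OF Suc.prems(1)] by blast
  have "card ?S < card C" using bs(3) Suc.prems by (simp add: linear_code_def)
  then have "\<not> C \<subseteq> ?S" using card_mono[OF finite_word_span, of C n bs] by linarith
  then obtain x where x: "x \<in> C" "x \<notin> ?S" by blast
  have "length x = n" using linear_code_length[OF Suc.prems(1) x(1)] .
  have disjoint: "?S \<inter> word_add x ` ?S = {}"
  proof (rule ccontr)
    assume "?S \<inter> word_add x ` ?S \<noteq> {}"
    then obtain z where "z \<in> ?S" "word_add x z \<in> ?S" by auto
    then have "word_add (word_add x z) z \<in> ?S" using word_add_in_word_span[OF len] by blast
    moreover have "word_add (word_add x z) z = x"
      using length_word_span[OF len \<open>z \<in> ?S\<close>] \<open>length x = n\<close> by (auto intro!: nth_equalityI)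
    ultimately show False using x(2) by simp
  qed
  have "inj_on (word_add x) ?S"
  proof (rule inj_onI)
    fix u v assume "u \<in> ?S" "v \<in> ?S" "word_add x u = word_add x v"
    then show "u = v"
      using word_add_cancel_left[of x u] word_add_cancel_left[of x v] length_word_span[OF len]
        \<open>length x = n\<close> by metis
  qed
  then have "card (word_span n (x # bs)) = 2 ^ Suc m"
    using disjoint bs(3) by (simp add: card_Un_disjoint finite_word_span card_image)
  then show ?case using bs x by (intro exI[of _ "x # bs"]) auto
qed

text \<open>The columns of C are determined by their values on a basis, so at most 2^k of them
  are distinct.\<close>
lemma linear_code_equal_columns:
  assumes C: "linear_code n k C" and long: "2 ^ k < n"
  obtains i j where "i < n" "j < n" "i \<noteq> j" "\<forall>x\<in>C. x ! i = x ! j"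
proof -
  obtain bs where bs: "length bs = k" "set bs \<subseteq> C" "card (word_span n bs) = 2 ^ k"
    using exists_list_card_word_span[OF C] by blast
  have span: "word_span n bs = C"
    using card_subset_eq[OF linear_code_finite[OF C] word_span_subset[OF C bs(2)]] bs(3) C
    by (simp add: linear_code_def)
  define column where "column j = map (\<lambda>b. b ! j) bs" for j
  have "column ` {..<n} \<subseteq> {xs. set xs \<subseteq> UNIV \<and> length xs = k}" using bs(1) by (auto simp: column_def)
  then have "card (column ` {..<n}) \<le> 2 ^ k"
    using card_mono[OF finite_lists_length_eq[of "UNIV :: bool set" k]]
      card_lists_length_eq[of "UNIV :: bool set" k] by simp
  then have "\<not> inj_on column {..<n}" using long card_image[of column "{..<n}"] by auto
  then obtain i j where ij: "i < n" "j < n" "i \<noteq> j" "column i = column j" by (auto simp: inj_on_def)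
  then have "\<forall>b\<in>set bs. length b = n \<and> b ! i = b ! j"
    using bs(2) linear_code_length[OF C] by (auto simp: column_def map_eq_conv)
  then have "\<forall>x\<in>C. x ! i = x ! j" using word_span_equal_coords ij span by blast
  with ij show ?thesis using that by blast
qed

section \<open>Deleting two equal coordinates\<close>

definition puncture_pad_positions :: "nat \<Rightarrow> nat \<Rightarrow> nat \<Rightarrow> nat \<Rightarrow> nat list" where
  "puncture_pad_positions n i j m = filter (\<lambda>l. l \<noteq> i \<and> l \<noteq> j) [0..<n] @ [n..<n + m]"

context
  fixes n i j m :: nat
  assumes ij: "i < n" "j < n" "i \<noteq> j"
begin

abbreviation puncture_pad :: "bool list \<Rightarrow> bool list" where
  "puncture_pad \<equiv> project (puncture_pad_positions n i j m)"

lemma distinct_puncture_pad_positions: "distinct (puncture_pad_positions n i j m)"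
  by (auto simp: puncture_pad_positions_def)

lemma length_puncture_pad_positions [simp]: "length (puncture_pad_positions n i j m) = n - 2 + m"
proof -
  have "length (filter (\<lambda>l. l \<noteq> i \<and> l \<noteq> j) [0..<n]) = card ({..<n} - {i, j})"
    by (simp add: distinct_card[symmetric] set_diff_eq conj_commute atLeast0LessThan)
  also have "\<dots> = n - 2" using ij by (simp add: card_Diff_subset)
  finally show ?thesis by (simp add: puncture_pad_positions_def)
qed

lemma puncture_pad_positions_below:
  "{l \<in> set (puncture_pad_positions n i j m). l < n \<and> P l} = {l. l < n \<and> l \<noteq> i \<and> l \<noteq> j \<and> P l}"
  by (auto simp: puncture_pad_positions_def)

lemma weight_le_weight_puncture_pad:
  assumes "length x = n"
  shows "weight x \<le> weight (puncture_pad x) + 2"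
proof -
  have "weight x \<le> card ({l. l < n \<and> l \<noteq> i \<and> l \<noteq> j \<and> x ! l} \<union> {i, j})"
    unfolding weight_eq_card assms by (rule card_mono) auto
  also have "\<dots> \<le> card {l. l < n \<and> l \<noteq> i \<and> l \<noteq> j \<and> x ! l} + card {i, j}"
    by (rule card_Un_le)
  also have "card {i, j} = 2" using ij by simp
  finally show ?thesis
    by (simp add: weight_project distinct_puncture_pad_positions assms puncture_pad_positions_below)
qed

text \<open>The deleted coordinates i and j contribute 0 or 2 to the inner product.\<close>
lemma even_dot_puncture_pad:
  assumes "length x = n" "length y = n" "x ! i = x ! j" "y ! i = y ! j" "even (dot x y)"
  shows "even (dot (puncture_pad x) (puncture_pad y))"
proof -
  let ?A = "{l. l < n \<and> (x ! l \<and> y ! l) \<and> (l \<noteq> i \<and> l \<noteq> j)}"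
  let ?B = "{l. l < n \<and> (x ! l \<and> y ! l) \<and> \<not> (l \<noteq> i \<and> l \<noteq> j)}"
  have "dot x y = card {l. l < n \<and> x ! l \<and> y ! l}" using dot_eq_card[of y x] assms(1,2) by simp
  then have "dot x y = card ?A + card ?B"
    using card_bounded_split[of n "\<lambda>l. x ! l \<and> y ! l" "\<lambda>l. l \<noteq> i \<and> l \<noteq> j"] by linarith
  moreover have "?B = (if x ! i \<and> y ! i then {i, j} else {})" using ij assms(3,4) by auto
  then have "even (card ?B)" using ij by simp
  ultimately have "even (card ?A)" using assms(5) by simp
  moreover have
    "dot (puncture_pad x) (puncture_pad y) = card {l. l < n \<and> l \<noteq> i \<and> l \<noteq> j \<and> x ! l \<and> y ! l}"
    using assms(1,2) by (simp add: dot_project distinct_puncture_pad_positions puncture_pad_positions_below)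
  moreover have "{l. l < n \<and> l \<noteq> i \<and> l \<noteq> j \<and> x ! l \<and> y ! l} = ?A" by auto
  ultimately show ?thesis by simp
qed

lemma self_orthogonal_puncture_pad:
  assumes so: "self_orthogonal C" and len: "\<forall>x\<in>C. length x = n" and equal: "\<forall>x\<in>C. x ! i = x ! j"
  shows "self_orthogonal (puncture_pad ` C)"
  unfolding self_orthogonal_def
proof (intro ballI)
  fix u v assume "u \<in> puncture_pad ` C" "v \<in> puncture_pad ` C"
  then obtain x y where x: "x \<in> C" "u = puncture_pad x" and y: "y \<in> C" "v = puncture_pad y" by blast
  have "even (dot x y)" using so x(1) y(1) by (simp add: self_orthogonal_def)
  then show "even (dot u v)"
    using even_dot_puncture_pad len equal x y by simp
qed

lemma puncture_pad_code:
  assumes C: "linear_code n k C" and so: "self_orthogonal C"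
    and "3 \<le> D" and "D \<le> min_dist C" and equal: "\<forall>x\<in>C. x ! i = x ! j"
  shows "linear_code (n - 2 + m) k (puncture_pad ` C)" "self_orthogonal (puncture_pad ` C)"
    "\<forall>y\<in>puncture_pad ` C. True \<in> set y \<longrightarrow> D - 2 \<le> weight y"
proof -
  have len: "length x = n" if "x \<in> C" for x using linear_code_length[OF C that] .
  have add: "puncture_pad (word_add x y) = word_add (puncture_pad x) (puncture_pad y)"
    if "x \<in> C" "y \<in> C" for x y using that len by (simp add: project_word_add)
  have weight: "D \<le> weight (puncture_pad x) + 2" if "x \<in> C" "True \<in> set x" for x
    using \<open>D \<le> min_dist C\<close> min_dist_le_weight[OF C that]
      weight_le_weight_puncture_pad[OF len[OF that(1)]] by linarith
  have "inj_on puncture_pad C"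
  proof (rule inj_onI)
    fix x y assume x: "x \<in> C" and y: "y \<in> C" and "puncture_pad x = puncture_pad y"
    then have "weight (puncture_pad (word_add x y)) = 0" using add by (simp add: word_add_self)
    moreover have "word_add x y \<in> C" using C x y by (simp add: linear_code_def)
    ultimately have "True \<notin> set (word_add x y)" using weight \<open>3 \<le> D\<close> by fastforce
    then show "x = y" using nonzero_word_add_iff len x y by simp
  qed
  then show "linear_code (n - 2 + m) k (puncture_pad ` C)"
    using add by (intro linear_code_image[OF C]) (simp_all add: card_image C[unfolded linear_code_def])
  show "self_orthogonal (puncture_pad ` C)"
    using self_orthogonal_puncture_pad so len equal by blast
  show "\<forall>y\<in>puncture_pad ` C. True \<in> set y \<longrightarrow> D - 2 \<le> weight y"
  proof (intro ballI impI)
    fix y assume "y \<in> puncture_pad ` C" "True \<in> set y"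
    then obtain x where x: "x \<in> C" "y = puncture_pad x" by blast
    have "True \<in> set x"
    proof (rule ccontr)
      assume "True \<notin> set x"
      then have "y = zero_word (n - 2 + m)"
        using x len nonzero_iff_neq_zero_word[of x] by (simp add: project_zero_word)
      then show False using \<open>True \<in> set y\<close> by simp
    qed
    then have "D \<le> weight y + 2" using weight x by simp
    then show "D - 2 \<le> weight y" by arith
  qed
qed

end

lemma exists_self_orthogonal_code_two_shorter:
  assumes C: "linear_code n k C" and so: "self_orthogonal C" and long: "2 ^ k < n"
    and "3 \<le> D" and "D \<le> min_dist C" and "n - 2 \<le> N"
  shows "\<exists>C'. linear_code N k C' \<and> self_orthogonal C' \<and>
           (\<forall>y\<in>C'. True \<in> set y \<longrightarrow> D - 2 \<le> weight y)"
proof -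
  obtain i j where ij: "i < n" "j < n" "i \<noteq> j" and equal: "\<forall>x\<in>C. x ! i = x ! j"
    using linear_code_equal_columns[OF C long] by blast
  have "N = n - 2 + (N - (n - 2))" using \<open>n - 2 \<le> N\<close> by simp
  then show ?thesis
    using puncture_pad_code[OF ij C so \<open>3 \<le> D\<close> \<open>D \<le> min_dist C\<close> equal, of "N - (n - 2)"]
    by metis
qed

lemma d_so_eqI:
  assumes "code n k d C" "self_orthogonal C"
    and "\<And>C' d'. code n k d' C' \<Longrightarrow> self_orthogonal C' \<Longrightarrow> d' \<le> d"
  shows "d_so n k = d"
  unfolding d_so_def
proof (rule Max_eqI)
  show "finite {d. \<exists>C. code n k d C \<and> self_orthogonal C}"
    using assms(3) by (auto intro: finite_subset[of _ "{..d}"])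
qed (use assms in auto)

theorem lemma5p5:
  fixes k d :: nat
  assumes "k \<ge> 1"
    and "\<exists>C. griesmer_code (griesmer_g k (d + 4)) k (d + 4) C \<and> self_orthogonal C"
    and "griesmer_g k (d + 4) > 2 ^ k"
  shows "\<forall>N. griesmer_g k (d + 2) + 1 \<le> N \<and> N \<le> griesmer_g k (d + 4) - 1
              \<longrightarrow> d_so N k = d + 2"
proof (intro allI impI)
  fix N assume N: "griesmer_g k (d + 2) + 1 \<le> N \<and> N \<le> griesmer_g k (d + 4) - 1"
  obtain C where C: "linear_code (griesmer_g k (d + 4)) k C" and so: "self_orthogonal C"
    and md: "min_dist C = d + 4"
    using assms(2) by (auto simp: griesmer_code_def code_def)
  have "0 < k" using assms(1) by simp
  have "even d" using self_orthogonal_even_min_dist[OF C \<open>0 < k\<close> so] md by simp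
  have "griesmer_g k (d + 4) - 2 \<le> N"
    using self_orthogonal_griesmer_length_le[OF C \<open>0 < k\<close> so md] N by arith
  then obtain C' where C': "linear_code N k C'" "self_orthogonal C'"
    and min': "\<forall>y\<in>C'. True \<in> set y \<longrightarrow> d + 2 \<le> weight y"
    using exists_self_orthogonal_code_two_shorter[OF C so assms(3), where D = "d + 4"] md by auto
  have "N < griesmer_g k (d + 4)" using N assms(3) by arith
  have upper: "min_dist C'' \<le> d + 2" if "linear_code N k C''" "self_orthogonal C''" for C''
  proof -
    have "min_dist C'' < d + 4"
      using min_dist_less_if_shorter[OF that(1) \<open>0 < k\<close> \<open>N < griesmer_g k (d + 4)\<close>] .
    with \<open>even d\<close> self_orthogonal_even_min_dist[OF that(1) \<open>0 < k\<close> that(2)] show ?thesis by presburger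
  qed
  have "min_dist C' = d + 2" using upper[OF C'] le_min_distI[OF C'(1) \<open>0 < k\<close>] min' by (meson le_antisym)
  then show "d_so N k = d + 2" using C' upper by (intro d_so_eqI) (auto simp: code_def)
qed

end
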